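(* Let $G$ be a group and let $x_1,x_2,x_3,g_1,g_2,g_3\in G$ be such that $$1=[x_1,x_2,x_3]=[x_1g_1,x_2g_2,x_3g_3]=[x_1g_1,x_2g_2,x_3]=[x_1g_1,x_2,x_3g_2]$$ $$=[x_1g_1,x_2,x_3]=[x_1g_1,x_2,x_3g_3]=[x_1,x_2,x_3g_1]=[x_1,x_2g_2,x_3g_1]$$ $$=[x_1,x_2g_2,x_3]=[x_1,x_2,x_3g_2]=[x_1,x_2g_2,x_3g_3]=[x_1,x_2,x_3g_3].$$ Then $[g_1,g_2,g_3]=1$.
   Context: Commutators: $[x,y]=x^{-1}y^{-1}xy$ and $[x,y,z]=[[x,y],z]$. *)

theory Defs
  imports "HOL-Algebra.Group"
begin

definition comm :: "('a, 'b) monoid_scheme \<Rightarrow> 'a \<Rightarrow> 'a \<Rightarrow> 'a" where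
  "comm G x y = inv\<^bsub>G\<^esub> x \<otimes>\<^bsub>G\<^esub> inv\<^bsub>G\<^esub> y \<otimes>\<^bsub>G\<^esub> x \<otimes>\<^bsub>G\<^esub> y"

definition comm3 :: "('a, 'b) monoid_scheme \<Rightarrow> 'a \<Rightarrow> 'a \<Rightarrow> 'a \<Rightarrow> 'a" where
  "comm3 G x y z = comm G (comm G x y) z"

end

theory Submission
  imports Defs
begin

text \<open>
  Write \<open>Z(a)\<close> for the centralizer of \<open>a\<close>. Then \<open>[a,b,c] = 1\<close> says \<open>c \<in> Z([a,b])\<close>, and as
  \<open>Z([a,b])\<close> is a subgroup, \<open>[a,b,c] = [a,b,cg] = 1\<close> gives \<open>g \<in> Z([a,b])\<close>.
  Moreover \<open>[xg,y] = [x,y]\<^sup>g [g,y]\<close> and \<open>[x,yg] = [x,g] [x,y]\<^sup>g\<close>.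
  Pairing each hypothesis with one having the same first two entries, we get that
  \<open>[x\<^sub>1,x\<^sub>2]\<close> commutes with \<open>g\<^sub>1, g\<^sub>2, g\<^sub>3\<close>, hence \<open>[x\<^sub>1g\<^sub>1,x\<^sub>2] = [x\<^sub>1,x\<^sub>2] [g\<^sub>1,x\<^sub>2]\<close>,
  and since this also commutes with \<open>g\<^sub>2, g\<^sub>3\<close>, so does \<open>[g\<^sub>1,x\<^sub>2]\<close>. Likewise
  \<open>[x\<^sub>1,x\<^sub>2g\<^sub>2]\<close> commutes with \<open>g\<^sub>1, g\<^sub>3\<close>. Expanding
  \<open>[x\<^sub>1g\<^sub>1,x\<^sub>2g\<^sub>2] = [x\<^sub>1,x\<^sub>2g\<^sub>2] [g\<^sub>1,g\<^sub>2] [g\<^sub>1,x\<^sub>2]\<close>, which commutes with \<open>g\<^sub>3\<close> as do the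
  outer two factors, shows that \<open>[g\<^sub>1,g\<^sub>2]\<close> commutes with \<open>g\<^sub>3\<close>.
\<close>

definition centralizer :: "('a, 'b) monoid_scheme \<Rightarrow> 'a \<Rightarrow> 'a set" where
  "centralizer G a = {x \<in> carrier G. a \<otimes>\<^bsub>G\<^esub> x = x \<otimes>\<^bsub>G\<^esub> a}"

context group
begin

lemma mult_inv_cancel_left [simp]: "x \<in> carrier G \<Longrightarrow> y \<in> carrier G \<Longrightarrow> x \<otimes> (inv x \<otimes> y) = y"
  by (simp add: m_assoc [symmetric])

lemma inv_mult_cancel_left [simp]: "x \<in> carrier G \<Longrightarrow> y \<in> carrier G \<Longrightarrow> inv x \<otimes> (x \<otimes> y) = y"
  by (simp add: m_assoc [symmetric])

lemma subgroup_mult_cancel_left: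
  assumes "subgroup H G" "x \<in> H" "y \<in> carrier G" "x \<otimes> y \<in> H"
  shows "y \<in> H"
proof -
  have "inv x \<otimes> (x \<otimes> y) \<in> H"
    using assms by (simp add: subgroup.m_closed subgroup.m_inv_closed)
  then show ?thesis
    using assms by (simp add: m_assoc [symmetric] subgroup.mem_carrier)
qed

lemma subgroup_mult_cancel_right:
  assumes "subgroup H G" "y \<in> H" "x \<in> carrier G" "x \<otimes> y \<in> H"
  shows "x \<in> H"
proof -
  have "(x \<otimes> y) \<otimes> inv y \<in> H"
    using assms by (simp add: subgroup.m_closed subgroup.m_inv_closed)
  then show ?thesis
    using assms by (simp add: m_assoc subgroup.mem_carrier)
qed

lemma centralizer_iff: "x \<in> centralizer G a \<longleftrightarrow> x \<in> carrier G \<and> a \<otimes> x = x \<otimes> a"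
  by (simp add: centralizer_def)

lemma centralizer_commute: "x \<in> centralizer G a \<Longrightarrow> a \<in> carrier G \<Longrightarrow> a \<in> centralizer G x"
  by (simp add: centralizer_iff)

lemma subgroup_centralizer:
  assumes "a \<in> carrier G"
  shows "subgroup (centralizer G a) G"
proof (rule subgroupI)
  show "centralizer G a \<noteq> {}"
    using assms by (auto simp: centralizer_def)
next
  fix x
  assume "x \<in> centralizer G a"
  then have x: "x \<in> carrier G" and ax: "a \<otimes> x = x \<otimes> a"
    by (simp_all add: centralizer_iff)
  have "a \<otimes> inv x = inv x \<otimes> (x \<otimes> a) \<otimes> inv x"
    using assms x by (simp add: m_assoc)
  also have "\<dots> = inv x \<otimes> a"
    using assms x by (simp add: m_assoc flip: ax)
  finally show "inv x \<in> centralizer G a"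
    using x by (simp add: centralizer_iff)
next
  fix x y
  assume "x \<in> centralizer G a" "y \<in> centralizer G a"
  then have x: "x \<in> carrier G" "a \<otimes> x = x \<otimes> a" and y: "y \<in> carrier G" "a \<otimes> y = y \<otimes> a"
    by (simp_all add: centralizer_iff)
  have "a \<otimes> (x \<otimes> y) = x \<otimes> (a \<otimes> y)"
    using assms x y(1) by (simp flip: m_assoc)
  also have "\<dots> = (x \<otimes> y) \<otimes> a"
    using assms x y by (simp add: m_assoc)
  finally show "x \<otimes> y \<in> centralizer G a"
    using x y by (simp add: centralizer_iff)
qed (auto simp: centralizer_def)

lemma conj_centralizer: "g \<in> centralizer G a \<Longrightarrow> a \<in> carrier G \<Longrightarrow> inv g \<otimes> a \<otimes> g = a"
  by (simp add: centralizer_iff m_assoc)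

lemma comm_closed [simp]: "x \<in> carrier G \<Longrightarrow> y \<in> carrier G \<Longrightarrow> comm G x y \<in> carrier G"
  by (simp add: comm_def)

lemma comm_eq_one_iff:
  assumes "x \<in> carrier G" "y \<in> carrier G"
  shows "comm G x y = \<one> \<longleftrightarrow> x \<otimes> y = y \<otimes> x"
proof -
  have "comm G x y = inv (y \<otimes> x) \<otimes> (x \<otimes> y)"
    using assms by (simp add: comm_def inv_mult_group m_assoc)
  then show ?thesis
    using assms by (simp add: inv_solve_left')
qed

lemma comm3_eq_one_iff:
  "x \<in> carrier G \<Longrightarrow> y \<in> carrier G \<Longrightarrow> z \<in> carrier G \<Longrightarrow>
    comm3 G x y z = \<one> \<longleftrightarrow> z \<in> centralizer G (comm G x y)"
  by (simp add: comm3_def comm_eq_one_iff centralizer_iff)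

lemma comm_mult_left:
  "x \<in> carrier G \<Longrightarrow> y \<in> carrier G \<Longrightarrow> g \<in> carrier G \<Longrightarrow>
    comm G (x \<otimes> g) y = (inv g \<otimes> comm G x y \<otimes> g) \<otimes> comm G g y"
  by (simp add: comm_def m_assoc inv_mult_group)

lemma comm_mult_right:
  "x \<in> carrier G \<Longrightarrow> y \<in> carrier G \<Longrightarrow> g \<in> carrier G \<Longrightarrow>
    comm G x (y \<otimes> g) = comm G x g \<otimes> (inv g \<otimes> comm G x y \<otimes> g)"
  by (simp add: comm_def m_assoc inv_mult_group)

lemma comm_mult_left_centralizer:
  "x \<in> carrier G \<Longrightarrow> y \<in> carrier G \<Longrightarrow> g \<in> centralizer G (comm G x y) \<Longrightarrow>
    comm G (x \<otimes> g) y = comm G x y \<otimes> comm G g y"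
  by (simp add: comm_mult_left conj_centralizer centralizer_iff)

lemma comm_mult_right_centralizer:
  "x \<in> carrier G \<Longrightarrow> y \<in> carrier G \<Longrightarrow> g \<in> centralizer G (comm G x y) \<Longrightarrow>
    comm G x (y \<otimes> g) = comm G x g \<otimes> comm G x y"
  by (simp add: comm_mult_right conj_centralizer centralizer_iff)

lemma centralizer_mult_cancel_left:
  assumes "g \<in> centralizer G a" "g \<in> centralizer G (a \<otimes> b)" "a \<in> carrier G" "b \<in> carrier G"
  shows "g \<in> centralizer G b"
proof -
  have g: "g \<in> carrier G"
    using assms(1) by (simp add: centralizer_iff)
  then have "b \<in> centralizer G g"
    using assms by (blast intro: subgroup_mult_cancel_left subgroup_centralizer centralizer_commute)
  then show ?thesis
    using g by (rule centralizer_commute)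
qed

lemma centralizer_mult_cancel_right:
  assumes "g \<in> centralizer G b" "g \<in> centralizer G (a \<otimes> b)" "a \<in> carrier G" "b \<in> carrier G"
  shows "g \<in> centralizer G a"
proof -
  have g: "g \<in> carrier G"
    using assms(1) by (simp add: centralizer_iff)
  then have "a \<in> centralizer G g"
    using assms by (blast intro: subgroup_mult_cancel_right subgroup_centralizer centralizer_commute)
  then show ?thesis
    using g by (rule centralizer_commute)
qed

lemma comm3_eq_one_mult_cancel:
  assumes "x \<in> carrier G" "y \<in> carrier G" "z \<in> carrier G" "g \<in> carrier G"
    and "comm3 G x y z = \<one>" "comm3 G x y (z \<otimes> g) = \<one>"
  shows "g \<in> centralizer G (comm G x y)"
proof (rule subgroup_mult_cancel_left)
  show "subgroup (centralizer G (comm G x y)) G"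
    using assms by (simp add: subgroup_centralizer)
  show "z \<in> centralizer G (comm G x y)" "z \<otimes> g \<in> centralizer G (comm G x y)"
    using assms by (simp_all add: comm3_eq_one_iff)
qed (fact assms)

lemma centralizer_comm_mult_left:
  assumes "x \<in> carrier G" "y \<in> carrier G" "g \<in> centralizer G (comm G x y)"
    and "h \<in> centralizer G (comm G x y)" "h \<in> centralizer G (comm G (x \<otimes> g) y)"
  shows "h \<in> centralizer G (comm G g y)"
proof -
  have "g \<in> carrier G"
    using assms(3) by (simp add: centralizer_iff)
  moreover have "h \<in> centralizer G (comm G x y \<otimes> comm G g y)"
    using assms by (simp flip: comm_mult_left_centralizer)
  ultimately show ?thesis
    using centralizer_mult_cancel_left [OF assms(4)] assms(1,2) by simp
qed

end

theorem lemma2p1: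
  fixes G (structure)
  assumes "group G"
    and "x1 \<in> carrier G" "x2 \<in> carrier G" "x3 \<in> carrier G"
    and "g1 \<in> carrier G" "g2 \<in> carrier G" "g3 \<in> carrier G"
    and "comm3 G x1 x2 x3 = \<one>"
    and "comm3 G (x1 \<otimes> g1) (x2 \<otimes> g2) (x3 \<otimes> g3) = \<one>"
    and "comm3 G (x1 \<otimes> g1) (x2 \<otimes> g2) x3 = \<one>"
    and "comm3 G (x1 \<otimes> g1) x2 (x3 \<otimes> g2) = \<one>"
    and "comm3 G (x1 \<otimes> g1) x2 x3 = \<one>"
    and "comm3 G (x1 \<otimes> g1) x2 (x3 \<otimes> g3) = \<one>"
    and "comm3 G x1 x2 (x3 \<otimes> g1) = \<one>"
    and "comm3 G x1 (x2 \<otimes> g2) (x3 \<otimes> g1) = \<one>"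
    and "comm3 G x1 (x2 \<otimes> g2) x3 = \<one>"
    and "comm3 G x1 x2 (x3 \<otimes> g2) = \<one>"
    and "comm3 G x1 (x2 \<otimes> g2) (x3 \<otimes> g3) = \<one>"
    and "comm3 G x1 x2 (x3 \<otimes> g3) = \<one>"
  shows "comm3 G g1 g2 g3 = \<one>"
proof -
  interpret group G by fact
  note x = assms(2-4) and g = assms(5-7)
  have x1g1: "x1 \<otimes> g1 \<in> carrier G" and x2g2: "x2 \<otimes> g2 \<in> carrier G"
    using x g by simp_all
  have Z_x1_x2: "g1 \<in> centralizer G (comm G x1 x2)" "g2 \<in> centralizer G (comm G x1 x2)"
      "g3 \<in> centralizer G (comm G x1 x2)"
    using comm3_eq_one_mult_cancel [OF x g(1) assms(8,14)]
      comm3_eq_one_mult_cancel [OF x g(2) assms(8,17)]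
      comm3_eq_one_mult_cancel [OF x g(3) assms(8,19)] .
  have Z_g1_x2: "g2 \<in> centralizer G (comm G g1 x2)" "g3 \<in> centralizer G (comm G g1 x2)"
    using centralizer_comm_mult_left [OF x(1,2) Z_x1_x2(1) Z_x1_x2(2)
        comm3_eq_one_mult_cancel [OF x1g1 x(2,3) g(2) assms(12,11)]]
      centralizer_comm_mult_left [OF x(1,2) Z_x1_x2(1) Z_x1_x2(3)
        comm3_eq_one_mult_cancel [OF x1g1 x(2,3) g(3) assms(12,13)]] .
  have Z_x1_x2g2: "g1 \<in> centralizer G (comm G x1 (x2 \<otimes> g2))"
      "g3 \<in> centralizer G (comm G x1 (x2 \<otimes> g2))"
    using comm3_eq_one_mult_cancel [OF x(1) x2g2 x(3) g(1) assms(16,15)]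
      comm3_eq_one_mult_cancel [OF x(1) x2g2 x(3) g(3) assms(16,18)] .
  have "comm G (x1 \<otimes> g1) (x2 \<otimes> g2) = comm G x1 (x2 \<otimes> g2) \<otimes> (comm G g1 g2 \<otimes> comm G g1 x2)"
    using comm_mult_left_centralizer [OF x(1) x2g2 Z_x1_x2g2(1)]
      comm_mult_right_centralizer [OF g(1) x(2) Z_g1_x2(1)] by simp
  then have "g3 \<in> centralizer G (comm G x1 (x2 \<otimes> g2) \<otimes> (comm G g1 g2 \<otimes> comm G g1 x2))"
    using comm3_eq_one_mult_cancel [OF x1g1 x2g2 x(3) g(3) assms(10,9)] by simp
  then have "g3 \<in> centralizer G (comm G g1 g2 \<otimes> comm G g1 x2)"
    using centralizer_mult_cancel_left [OF Z_x1_x2g2(2)] x g x2g2 by simp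
  then have "g3 \<in> centralizer G (comm G g1 g2)"
    using centralizer_mult_cancel_right [OF Z_g1_x2(2)] x g by simp
  then show ?thesis
    using comm3_eq_one_iff [OF g] by simp
qed

end
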